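(* The projectors $\hat P_g$, $g\in G$, onto the isotypes of $\hat U$ satisfy the Knill–Laflamme condition diagonally: $\Pi_{\rm pn}\hat P_g\hat P_{g'}\Pi_{\rm pn}=\frac1{2^{n-k}}\delta_{g,g'}\Pi_{\rm pn}$ for all $g,g'\in G$.
   Context: Let $n\ge1$, $0\le k<n$, $\mathcal{H}_{\rm kin}=(\mathbb{C}^2)^{\otimes n}$, $G=\mathbb{Z}_2^{\times(n-k)}$, and $U:G\to\mathcal{P}_n$, $g\mapsto U^g$, a faithful unitary representation into the $n$-qubit Pauli group with $-I\notin U(G)$ (stabilizer code); $\Pi_{\rm pn}=\frac1{|G|}\sum_gU^g$ is the projector onto the code space. $\hat G$ is the group of characters $\chi:G\to\{\pm1\}$. Let $\hat U:\hat G\to\mathrm{Aut}(\mathcal{H}_{\rm kin})$, $\chi\mapsto\hat U^\chi$, be a unitary representation dual to $U$, i.e. $U^g\hat U^\chi=\chi(g)\hat U^\chi U^g$ for all $g,\chi$, and for $g\in G$ let $\hat P_g=\frac1{2^{n-k}}\sum_{\chi\in\hat G}\chi(g)\hat U^\chi$ (the orthogonal projector onto the isotype of $\hat U$ labeled by $g$). *)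

theory Defs
  imports Complex_Main
begin

text \<open>Operators on C^N are represented as functions nat => nat => complex
  (matrix entries), with all entries outside {0..<N} x {0..<N} irrelevant/zero.\<close>

type_synonym op = "nat \<Rightarrow> nat \<Rightarrow> complex"

definition mmul :: "nat \<Rightarrow> op \<Rightarrow> op \<Rightarrow> op" where
  "mmul N A B = (\<lambda>i j. \<Sum>l<N. A i l * B l j)"

definition idop :: "nat \<Rightarrow> op" where
  "idop N = (\<lambda>i j. if i < N \<and> j = i then 1 else 0)"

definition adj :: "op \<Rightarrow> op" where
  "adj A = (\<lambda>i j. cnj (A j i))"

definition scl :: "complex \<Rightarrow> op \<Rightarrow> op" where
  "scl c A = (\<lambda>i j. c * A i j)"

definition is_op :: "nat \<Rightarrow> op \<Rightarrow> bool" where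
  "is_op N A \<longleftrightarrow> (\<forall>i j. (N \<le> i \<or> N \<le> j) \<longrightarrow> A i j = 0)"

definition unitary_op :: "nat \<Rightarrow> op \<Rightarrow> bool" where
  "unitary_op N A \<longleftrightarrow> is_op N A \<and> mmul N (adj A) A = idop N \<and> mmul N A (adj A) = idop N"

text \<open>Computational basis of (C^2)^{tensor n}: basis vector |s>, s < 2^n, whose
  j-th qubit is the j-th bit of s.\<close>

definition bits :: "nat \<Rightarrow> nat \<Rightarrow> nat set" where
  "bits n s = {j. j < n \<and> bit s j}"

definition symd :: "'a set \<Rightarrow> 'a set \<Rightarrow> 'a set" where
  "symd A B = (A - B) \<union> (B - A)"

text \<open>The n-qubit Pauli operator  i^c X^a Z^b  (X on the qubits in a, Z on the qubits in b).\<close>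

definition pauli :: "nat \<Rightarrow> nat set \<Rightarrow> nat set \<Rightarrow> nat \<Rightarrow> op" where
  "pauli n a b c = (\<lambda>r s. if r < 2^n \<and> s < 2^n \<and> bits n r = symd (bits n s) a
       then \<i> ^ c * (-1) ^ card (b \<inter> bits n s) else 0)"

definition pauli_group :: "nat \<Rightarrow> op set" where
  "pauli_group n = {pauli n a b c | a b c. a \<subseteq> {..<n} \<and> b \<subseteq> {..<n}}"

text \<open>The group Z_2^m, realised as subsets of {0..<m} under symmetric difference.\<close>

definition Gc :: "nat \<Rightarrow> nat set set" where
  "Gc m = Pow {..<m}"

text \<open>Its character group: homomorphisms to {1,-1} (extensional: 0 outside the carrier);
  the group operation is pointwise multiplication.\<close>

definition chars :: "nat \<Rightarrow> (nat set \<Rightarrow> complex) set" where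
  "chars m = {\<chi>. (\<forall>g\<in>Gc m. \<chi> g = 1 \<or> \<chi> g = -1)
                 \<and> (\<forall>g\<in>Gc m. \<forall>h\<in>Gc m. \<chi> (symd g h) = \<chi> g * \<chi> h)
                 \<and> (\<forall>g. g \<notin> Gc m \<longrightarrow> \<chi> g = 0)}"

definition code_proj :: "nat \<Rightarrow> nat \<Rightarrow> (nat set \<Rightarrow> op) \<Rightarrow> op" where
  "code_proj n m U = (\<lambda>i j. (1 / 2 ^ m) * (\<Sum>h\<in>Gc m. U h i j))"

definition iso_proj :: "nat \<Rightarrow> nat \<Rightarrow> ((nat set \<Rightarrow> complex) \<Rightarrow> op) \<Rightarrow> nat set \<Rightarrow> op" where
  "iso_proj n m Uh g = (\<lambda>i j. (1 / 2 ^ m) * (\<Sum>\<chi>\<in>chars m. \<chi> g * Uh \<chi> i j))"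

end

(* The code projector P = 2^-m sum_h U^h absorbs every U^h. Commuting U^h past Uh^chi
   costs the sign chi(h), so averaging over h gives P Uh^chi P = 0 for a nontrivial
   character and P Uh^chi P = P for the trivial one (whose image is the identity, being a
   unitary idempotent); hence P P_g P = 2^-m P. On the other side Uh^chi acts on the range
   of P_g as the scalar chi(g), and character orthogonality, sum_chi chi(g + g') =
   2^m delta(g, g'), turns this into P_g P_g' = delta(g, g') P_g'. *)

theory Submission
  imports Defs
begin

definition opsum :: "'a set \<Rightarrow> ('a \<Rightarrow> op) \<Rightarrow> op" where
  "opsum S f = (\<lambda>i j. \<Sum>x\<in>S. f x i j)"

lemma opsum_cong: "(\<And>x. x \<in> S \<Longrightarrow> f x = g x) \<Longrightarrow> opsum S f = opsum S g"
  unfolding opsum_def by (auto intro!: ext sum.cong)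

lemma opsum_reindex_bij_betw: "bij_betw h S S \<Longrightarrow> opsum S (\<lambda>x. f (h x)) = opsum S f"
  unfolding opsum_def by (auto intro!: ext sum.reindex_bij_betw)

lemma opsum_scl_const: "opsum S (\<lambda>x. scl (c x) A) = scl (\<Sum>x\<in>S. c x) A"
  unfolding scl_def opsum_def by (auto simp: sum_distrib_right)

lemma scl_opsum: "scl c (opsum S f) = opsum S (\<lambda>x. scl c (f x))"
  unfolding scl_def opsum_def by (auto simp: sum_distrib_left)

lemma scl_scl: "scl a (scl b A) = scl (a * b) A"
  unfolding scl_def by (auto simp: mult.assoc)

lemma scl_one: "scl 1 A = A"
  unfolding scl_def by simp

lemma scl_zero: "scl 0 A = (\<lambda>i j. 0)"
  unfolding scl_def by simp

lemma mmul_assoc: "mmul N (mmul N A B) C = mmul N A (mmul N B C)"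
  unfolding mmul_def
  by (auto simp: sum_distrib_left sum_distrib_right mult.assoc intro!: ext sum.swap[THEN trans] sum.cong)

lemma mmul_opsum_left: "mmul N (opsum S f) B = opsum S (\<lambda>x. mmul N (f x) B)"
  unfolding mmul_def opsum_def by (auto simp: sum_distrib_right intro!: ext sum.swap)

lemma mmul_opsum_right: "mmul N A (opsum S f) = opsum S (\<lambda>x. mmul N A (f x))"
  unfolding mmul_def opsum_def by (auto simp: sum_distrib_left intro!: ext sum.swap)

lemma mmul_scl_left: "mmul N (scl c A) B = scl c (mmul N A B)"
  unfolding mmul_def scl_def by (auto simp: sum_distrib_left mult.assoc intro!: ext)

lemma mmul_scl_right: "mmul N A (scl c B) = scl c (mmul N A B)"
  unfolding mmul_def scl_def by (auto simp: sum_distrib_left mult.left_commute intro!: ext)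

lemma mmul_idop_left:
  assumes "is_op N A"
  shows "mmul N (idop N) A = A"
proof (intro ext)
  fix i j
  have "mmul N (idop N) A i j = (\<Sum>l<N. if l = i then A i j else 0)"
    unfolding mmul_def idop_def by (rule sum.cong) auto
  also have "\<dots> = A i j"
    using assms unfolding is_op_def by auto
  finally show "mmul N (idop N) A i j = A i j" .
qed

lemma is_op_scl_opsum: "(\<And>x. x \<in> S \<Longrightarrow> is_op N (f x)) \<Longrightarrow> is_op N (scl c (opsum S f))"
  unfolding is_op_def scl_def opsum_def by auto

lemma unitary_idempotent_eq_idop:
  assumes unitary: "unitary_op N A" and idem: "mmul N A A = A"
  shows "A = idop N"
proof -
  have "idop N = mmul N (adj A) (mmul N A A)"
    using unitary idem unfolding unitary_op_def by simp
  also have "\<dots> = A"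
    using unitary by (simp add: mmul_assoc[symmetric] mmul_idop_left unitary_op_def)
  finally show ?thesis by simp
qed

lemma pauli_group_is_op: "A \<in> pauli_group n \<Longrightarrow> is_op (2 ^ n) A"
  unfolding pauli_group_def pauli_def is_op_def by auto

lemma symd_self [simp]: "symd h h = {}"
  unfolding symd_def by auto

lemma symd_commute: "symd g h = symd h g"
  unfolding symd_def by auto

lemma symd_cancel: "symd (symd h a) a = h"
  unfolding symd_def by auto

lemma symd_eq_empty_iff: "symd g h = {} \<longleftrightarrow> g = h"
  unfolding symd_def by auto

lemma symd_in_Gc: "g \<in> Gc m \<Longrightarrow> h \<in> Gc m \<Longrightarrow> symd g h \<in> Gc m"
  unfolding symd_def Gc_def by auto

lemma empty_in_Gc: "{} \<in> Gc m"
  unfolding Gc_def by auto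

lemma finite_Gc: "finite (Gc m)"
  unfolding Gc_def by simp

lemma card_Gc: "card (Gc m) = 2 ^ m"
  unfolding Gc_def by (simp add: card_Pow)

lemma bij_betw_symd_Gc: "a \<in> Gc m \<Longrightarrow> bij_betw (\<lambda>h. symd h a) (Gc m) (Gc m)"
  by (rule bij_betw_byWitness[where f' = "\<lambda>h. symd h a"]) (auto simp: symd_in_Gc symd_cancel)

definition trivial_char :: "nat \<Rightarrow> nat set \<Rightarrow> complex" where
  "trivial_char m = (\<lambda>h. if h \<in> Gc m then 1 else 0)"

definition parity_char :: "nat \<Rightarrow> nat \<Rightarrow> nat set \<Rightarrow> complex" where
  "parity_char m j = (\<lambda>h. if h \<in> Gc m then if j \<in> h then -1 else 1 else 0)"

lemma char_values: "\<chi> \<in> chars m \<Longrightarrow> g \<in> Gc m \<Longrightarrow> \<chi> g = 1 \<or> \<chi> g = -1"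
  unfolding chars_def by auto

lemma char_symd: "\<chi> \<in> chars m \<Longrightarrow> g \<in> Gc m \<Longrightarrow> h \<in> Gc m \<Longrightarrow> \<chi> (symd g h) = \<chi> g * \<chi> h"
  unfolding chars_def by auto

lemma char_outside: "\<chi> \<in> chars m \<Longrightarrow> g \<notin> Gc m \<Longrightarrow> \<chi> g = 0"
  unfolding chars_def by auto

lemma char_empty: "\<chi> \<in> chars m \<Longrightarrow> \<chi> {} = 1"
  using char_symd[of \<chi> m "{}" "{}"] char_values[of \<chi> m "{}"] by (auto simp: empty_in_Gc)

lemma trivial_char_in_chars: "trivial_char m \<in> chars m"
  unfolding chars_def trivial_char_def by (auto simp: symd_in_Gc)

lemma parity_char_in_chars: "parity_char m j \<in> chars m"
proof -
  have "j \<in> symd g h \<longleftrightarrow> (j \<in> g \<longleftrightarrow> j \<notin> h)" for g h :: "nat set"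
    unfolding symd_def by auto
  then show ?thesis
    unfolding chars_def parity_char_def by (auto simp: symd_in_Gc)
qed

lemma char_mult_in_chars:
  assumes "\<chi> \<in> chars m" "\<psi> \<in> chars m"
  shows "(\<lambda>h. \<chi> h * \<psi> h) \<in> chars m"
proof -
  have "\<chi> g * \<psi> g = 1 \<or> \<chi> g * \<psi> g = -1" if "g \<in> Gc m" for g
    using char_values[OF assms(1) that] char_values[OF assms(2) that] by auto
  then show ?thesis
    using char_symd[OF assms(1)] char_symd[OF assms(2)] char_outside[OF assms(1)]
    unfolding chars_def by (auto simp: algebra_simps)
qed

lemma char_mult_cancel:
  assumes "\<chi> \<in> chars m" "\<psi> \<in> chars m"
  shows "(\<lambda>h. \<chi> h * (\<chi> h * \<psi> h)) = \<psi>"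
proof
  fix h
  show "\<chi> h * (\<chi> h * \<psi> h) = \<psi> h"
    using char_values[OF assms(1), of h] char_outside[OF assms(2), of h]
    by (cases "h \<in> Gc m") auto
qed

lemma bij_betw_char_mult:
  assumes "\<chi> \<in> chars m"
  shows "bij_betw (\<lambda>\<psi> h. \<chi> h * \<psi> h) (chars m) (chars m)"
  by (rule bij_betw_byWitness[where f' = "\<lambda>\<psi> h. \<chi> h * \<psi> h"])
    (auto simp: char_mult_in_chars assms intro: char_mult_cancel[OF assms])

lemma finite_chars: "finite (chars m)"
proof (rule finite_subset)
  show "chars m \<subseteq> {\<chi>. \<forall>g. (g \<in> Gc m \<longrightarrow> \<chi> g \<in> {1, -1}) \<and> (g \<notin> Gc m \<longrightarrow> \<chi> g = 0)}"
    by (auto dest: char_values char_outside)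
  show "finite \<dots>"
    by (rule finite_set_of_finite_funs) (simp_all add: finite_Gc)
qed

lemma sum_Gc_char:
  assumes "\<chi> \<in> chars m"
  shows "(\<Sum>h\<in>Gc m. \<chi> h) = (if \<chi> = trivial_char m then 2 ^ m else 0)"
proof (cases "\<chi> = trivial_char m")
  case True
  then show ?thesis by (simp add: trivial_char_def card_Gc)
next
  case False
  then obtain a where a: "a \<in> Gc m" "\<chi> a \<noteq> 1"
    using char_outside[OF assms] unfolding trivial_char_def by fastforce
  then have "\<chi> a = -1"
    using char_values[OF assms] by blast
  have "(\<Sum>h\<in>Gc m. \<chi> h) = (\<Sum>h\<in>Gc m. \<chi> (symd h a))"
    using sum.reindex_bij_betw[OF bij_betw_symd_Gc[OF a(1)], of \<chi>] by simp
  also have "\<dots> = - (\<Sum>h\<in>Gc m. \<chi> h)"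
    by (simp add: char_symd[OF assms] a(1) \<open>\<chi> a = -1\<close> sum_negf)
  finally show ?thesis
    using False by simp
qed

lemma sum_chars_nonempty:
  assumes "d \<in> Gc m" "d \<noteq> {}"
  shows "(\<Sum>\<chi>\<in>chars m. \<chi> d) = 0"
proof -
  obtain j where "j \<in> d"
    using assms(2) by blast
  define \<phi> where "\<phi> = parity_char m j"
  have \<phi>: "\<phi> \<in> chars m" "\<phi> d = -1"
    using assms(1) \<open>j \<in> d\<close> unfolding \<phi>_def
    by (simp add: parity_char_in_chars, simp add: parity_char_def)
  have "(\<Sum>\<chi>\<in>chars m. \<chi> d) = (\<Sum>\<chi>\<in>chars m. \<phi> d * \<chi> d)"
    using sum.reindex_bij_betw[OF bij_betw_char_mult[OF \<phi>(1)], of "\<lambda>\<chi>. \<chi> d"] by simp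
  also have "\<dots> = - (\<Sum>\<chi>\<in>chars m. \<chi> d)"
    by (simp add: \<phi>(2) sum_negf)
  finally show ?thesis
    by simp
qed

lemma card_chars: "card (chars m) = 2 ^ m"
proof -
  have "of_nat (card (chars m)) = (\<Sum>g\<in>Gc m. \<Sum>\<chi>\<in>chars m. \<chi> g)"
    by (subst sum.remove[OF finite_Gc empty_in_Gc])
      (simp add: char_empty sum_chars_nonempty)
  also have "\<dots> = (\<Sum>\<chi>\<in>chars m. \<Sum>g\<in>Gc m. \<chi> g)"
    by (rule sum.swap)
  also have "\<dots> = (2 :: complex) ^ m"
    by (simp add: sum_Gc_char sum.delta finite_chars trivial_char_in_chars cong: sum.cong)
  finally show ?thesis
    by (metis of_nat_eq_iff of_nat_numeral of_nat_power)
qed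

lemma sum_chars:
  assumes "d \<in> Gc m"
  shows "(\<Sum>\<chi>\<in>chars m. \<chi> d) = (if d = {} then 2 ^ m else 0)"
  using sum_chars_nonempty[OF assms] card_chars[of m] by (simp add: char_empty)


lemma code_proj_eq: "code_proj n m U = scl (1 / 2 ^ m) (opsum (Gc m) U)"
  unfolding code_proj_def scl_def opsum_def by simp

lemma iso_proj_eq: "iso_proj n m Uh g = scl (1 / 2 ^ m) (opsum (chars m) (\<lambda>\<chi>. scl (\<chi> g) (Uh \<chi>)))"
  unfolding iso_proj_def scl_def opsum_def by simp

locale dual_representations =
  fixes N m :: nat
    and U :: "nat set \<Rightarrow> op"
    and Uh :: "(nat set \<Rightarrow> complex) \<Rightarrow> op"
  assumes U_is_op: "h \<in> Gc m \<Longrightarrow> is_op N (U h)"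
    and U_hom: "h1 \<in> Gc m \<Longrightarrow> h2 \<in> Gc m \<Longrightarrow> U (symd h1 h2) = mmul N (U h1) (U h2)"
    and Uh_unitary: "\<chi> \<in> chars m \<Longrightarrow> unitary_op N (Uh \<chi>)"
    and Uh_hom: "\<chi> \<in> chars m \<Longrightarrow> \<psi> \<in> chars m \<Longrightarrow>
                   Uh (\<lambda>h. \<chi> h * \<psi> h) = mmul N (Uh \<chi>) (Uh \<psi>)"
    and dual: "h \<in> Gc m \<Longrightarrow> \<chi> \<in> chars m \<Longrightarrow>
                 mmul N (U h) (Uh \<chi>) = scl (\<chi> h) (mmul N (Uh \<chi>) (U h))"
begin

lemma Uh_trivial_char: "Uh (trivial_char m) = idop N"
proof (rule unitary_idempotent_eq_idop)
  show "unitary_op N (Uh (trivial_char m))"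
    by (rule Uh_unitary[OF trivial_char_in_chars])
  have "(\<lambda>h. trivial_char m h * trivial_char m h) = trivial_char m"
    unfolding trivial_char_def by auto
  then show "mmul N (Uh (trivial_char m)) (Uh (trivial_char m)) = Uh (trivial_char m)"
    using Uh_hom[OF trivial_char_in_chars trivial_char_in_chars] by simp
qed

lemma is_op_code_proj: "is_op N (code_proj n m U)"
  unfolding code_proj_eq by (rule is_op_scl_opsum) (rule U_is_op)

lemma U_mult_code_proj:
  assumes "h \<in> Gc m"
  shows "mmul N (U h) (code_proj n m U) = code_proj n m U"
proof -
  have "opsum (Gc m) (\<lambda>h'. mmul N (U h) (U h')) = opsum (Gc m) (\<lambda>h'. U (symd h' h))"
    by (rule opsum_cong) (metis U_hom assms symd_commute)
  also have "\<dots> = opsum (Gc m) U"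
    by (rule opsum_reindex_bij_betw[OF bij_betw_symd_Gc[OF assms]])
  finally show ?thesis
    unfolding code_proj_eq by (simp add: mmul_scl_right mmul_opsum_right)
qed

lemma code_proj_Uh_code_proj:
  assumes "\<chi> \<in> chars m"
  shows "mmul N (code_proj n m U) (mmul N (Uh \<chi>) (code_proj n m U))
           = scl (if \<chi> = trivial_char m then 1 else 0) (code_proj n m U)"
proof -
  define X where "X = mmul N (Uh \<chi>) (code_proj n m U)"
  have "mmul N (U h) X = scl (\<chi> h) X" if "h \<in> Gc m" for h
    unfolding X_def
    by (simp add: mmul_assoc[symmetric] dual[OF that assms] mmul_scl_left)
      (simp add: mmul_assoc U_mult_code_proj[OF that])
  then have "mmul N (code_proj n m U) X = scl (1 / 2 ^ m) (scl (\<Sum>h\<in>Gc m. \<chi> h) X)"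
    unfolding code_proj_eq
    by (simp add: mmul_scl_left mmul_opsum_left opsum_scl_const[symmetric] cong: opsum_cong)
  then show ?thesis
    unfolding X_def
    by (simp add: sum_Gc_char assms scl_scl scl_zero Uh_trivial_char mmul_idop_left is_op_code_proj)
qed

lemma Uh_mult_iso_proj:
  assumes "\<chi> \<in> chars m"
  shows "mmul N (Uh \<chi>) (iso_proj n m Uh g) = scl (\<chi> g) (iso_proj n m Uh g)"
proof -
  have "mmul N (Uh \<chi>) (opsum (chars m) (\<lambda>\<psi>. scl (\<psi> g) (Uh \<psi>)))
      = opsum (chars m) (\<lambda>\<psi>. scl (\<psi> g) (Uh (\<lambda>h. \<chi> h * \<psi> h)))"
    by (auto simp: mmul_opsum_right mmul_scl_right Uh_hom assms intro: opsum_cong)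
  also have "\<dots> = opsum (chars m) (\<lambda>\<phi>. scl (\<chi> g * \<phi> g) (Uh (\<lambda>h. \<chi> h * (\<chi> h * \<phi> h))))"
    by (rule opsum_reindex_bij_betw[OF bij_betw_char_mult[OF assms], symmetric])
  also have "\<dots> = opsum (chars m) (\<lambda>\<phi>. scl (\<chi> g * \<phi> g) (Uh \<phi>))"
    by (rule opsum_cong) (metis char_mult_cancel assms)
  also have "\<dots> = scl (\<chi> g) (opsum (chars m) (\<lambda>\<phi>. scl (\<phi> g) (Uh \<phi>)))"
    by (simp add: scl_opsum scl_scl)
  finally show ?thesis
    unfolding iso_proj_eq by (simp add: mmul_scl_right scl_scl mult.commute)
qed

lemma iso_proj_mult:
  assumes "g \<in> Gc m" "g' \<in> Gc m"
  shows "mmul N (iso_proj n m Uh g) (iso_proj n m Uh g')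
           = scl (if g = g' then 1 else 0) (iso_proj n m Uh g')"
proof -
  have "opsum (chars m) (\<lambda>\<chi>. scl (\<chi> g) (mmul N (Uh \<chi>) (iso_proj n m Uh g')))
      = opsum (chars m) (\<lambda>\<chi>. scl (\<chi> (symd g g')) (iso_proj n m Uh g'))"
    by (rule opsum_cong) (simp add: Uh_mult_iso_proj scl_scl char_symd assms)
  also have "\<dots> = scl (if g = g' then 2 ^ m else 0) (iso_proj n m Uh g')"
    by (simp add: opsum_scl_const sum_chars symd_in_Gc symd_eq_empty_iff assms)
  finally show ?thesis
    by (simp add: iso_proj_eq[of n m Uh g] mmul_scl_left mmul_opsum_left scl_scl)
qed

lemma code_proj_iso_proj_code_proj:
  assumes "g \<in> Gc m"
  shows "mmul N (code_proj n m U) (mmul N (iso_proj n m Uh g) (code_proj n m U))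
           = scl (1 / 2 ^ m) (code_proj n m U)"
proof -
  have "opsum (chars m) (\<lambda>\<chi>. scl (\<chi> g)
          (mmul N (code_proj n m U) (mmul N (Uh \<chi>) (code_proj n m U))))
      = opsum (chars m) (\<lambda>\<chi>. scl (if \<chi> = trivial_char m then \<chi> g else 0) (code_proj n m U))"
    by (rule opsum_cong) (simp add: code_proj_Uh_code_proj scl_scl)
  also have "\<dots> = code_proj n m U"
    using assms trivial_char_in_chars[of m]
    by (simp add: opsum_scl_const sum.delta finite_chars, simp add: trivial_char_def scl_one)
  finally show ?thesis
    by (simp add: iso_proj_eq[of n m Uh g] mmul_scl_left mmul_scl_right mmul_opsum_left
        mmul_opsum_right)
qed

end

theorem mainTheorem15:
  fixes n k :: nat
    and U :: "nat set \<Rightarrow> op"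
    and Uh :: "(nat set \<Rightarrow> complex) \<Rightarrow> op"
    and g g' :: "nat set"
  assumes "1 \<le> n" and "k < n"
    and U_pauli: "\<forall>h\<in>Gc (n - k). U h \<in> pauli_group n"
    and U_hom: "\<forall>h1\<in>Gc (n - k). \<forall>h2\<in>Gc (n - k). U (symd h1 h2) = mmul (2^n) (U h1) (U h2)"
    and U_faithful: "inj_on U (Gc (n - k))"
    and U_stab: "\<forall>h\<in>Gc (n - k). U h \<noteq> scl (-1) (idop (2^n))"
    and Uh_unitary: "\<forall>\<chi>\<in>chars (n - k). unitary_op (2^n) (Uh \<chi>)"
    and Uh_hom: "\<forall>\<chi>\<in>chars (n - k). \<forall>\<psi>\<in>chars (n - k).
                   Uh (\<lambda>h. \<chi> h * \<psi> h) = mmul (2^n) (Uh \<chi>) (Uh \<psi>)"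
    and dual: "\<forall>h\<in>Gc (n - k). \<forall>\<chi>\<in>chars (n - k).
                 mmul (2^n) (U h) (Uh \<chi>) = scl (\<chi> h) (mmul (2^n) (Uh \<chi>) (U h))"
    and "g \<in> Gc (n - k)" and "g' \<in> Gc (n - k)"
  shows "mmul (2^n) (code_proj n (n - k) U)
           (mmul (2^n) (iso_proj n (n - k) Uh g)
             (mmul (2^n) (iso_proj n (n - k) Uh g') (code_proj n (n - k) U)))
         = scl (if g = g' then 1 / 2 ^ (n - k) else 0) (code_proj n (n - k) U)"
proof -
  interpret dual_representations "2 ^ n" "n - k" U Uh
    using U_pauli U_hom Uh_unitary Uh_hom dual
    by unfold_locales (auto intro: pauli_group_is_op)
  let ?P = "code_proj n (n - k) U" and ?Q = "iso_proj n (n - k) Uh"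
  have "mmul (2^n) ?P (mmul (2^n) (?Q g) (mmul (2^n) (?Q g') ?P))
      = mmul (2^n) ?P (mmul (2^n) (mmul (2^n) (?Q g) (?Q g')) ?P)"
    by (simp add: mmul_assoc)
  also have "\<dots> = scl (if g = g' then 1 else 0) (mmul (2^n) ?P (mmul (2^n) (?Q g') ?P))"
    using \<open>g \<in> Gc (n - k)\<close> \<open>g' \<in> Gc (n - k)\<close>
    by (simp add: iso_proj_mult mmul_scl_left mmul_scl_right)
  also have "\<dots> = scl (if g = g' then 1 / 2 ^ (n - k) else 0) ?P"
    using \<open>g' \<in> Gc (n - k)\<close> by (simp add: code_proj_iso_proj_code_proj scl_scl)
  finally show ?thesis .
qed

end
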